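(* In the multi-user imperfect-prediction setting below, for all $\lambda\ge0$, $$g_I^l(\lambda)\le g_I(\lambda)\le g_I^u(\lambda),$$ and consequently $\min_{\lambda\ge0}g_I^l(\lambda)\le\min_{\lambda\ge0}g_I(\lambda)\le\min_{\lambda\ge0}g_I^u(\lambda)$.
   Context: $N$ users; $B>0$; $a_{\max}>0$. User $n$ has arrival rate $a_n\ge0$, true-positive rate $p_n$ and false-negative rate $q_n$ with $0\le q_n<p_n\le1$ and $q_n\le a_n/a_{\max}\le p_n$, $\tilde a_n=\frac{a_n-a_{\max}q_n}{p_n-q_n}$, a probability vector $\boldsymbol\eta_n$ on its channel states, $\beta_n\ge0$, integers $\tau_n\ge1$, $D_n\ge1$, a Markov channel on $\{1,\dots,K_n\}$ with transition matrix $(P_n^{i,j})$, a finite $\mathcal E\subset[0,\infty)$ containing $0$ and a positive element, and $\zeta_n(i,\cdot):\mathcal E\to[0,1]$ with $\zeta_n(i,0)=0$, $\zeta_n(i,e)>0$ for $e>0$, strictly increasing; states totally ordered by $\zeta_n$ (for all $i,j$ either $\zeta_n(i,e)\ge\zeta_n(j,e)\ \forall e$ or $\le\ \forall e$) with extremal states $i_n^{\max},i_n^{\min}$. For $\lambda\ge0$ (all functions depend on $\lambda$): $V_n^l(0)=0$, $V_n^l(\tau)=\max_{e>0}\frac{1-[1-\zeta_n(i_n^{\min},e)]^{\tau}}{\zeta_n(i_n^{\min},e)}[-\lambda e+\zeta_n(i_n^{\min},e)\beta_n]$; $V_n^u(0)=0$, $V_n^u(\tau)=\sum_{z=1}^{\tau}\max_{e}\{-\lambda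 e+\zeta_n(i_n^{\max},e)(\beta_n-\max\{0,V_n^l(z-1)\})\}$; for $\tau_n\le\tau\le\tau_n+D_n$, $\tilde V_n^l(\tau)=\max_{e>0}\{-(1-p_n)\frac{1-[1-\zeta_n(i_n^{\min},e)]^{\tau-\tau_n}}{\zeta_n(i_n^{\min},e)}\lambda e+p_n\frac{1-[1-\zeta_n(i_n^{\min},e)]^{\tau}}{\zeta_n(i_n^{\min},e)}[-\lambda e+\zeta_n(i_n^{\min},e)\beta_n]\}$ and $\tilde V_n^u(\tau)=\sum_{z=\tau_n+1}^{\tau}\max_e\{-\lambda e+\zeta_n(i_n^{\max},e)(p_n\beta_n-\max\{0,\tilde V_n^l(\tau_n),\tilde V_n^l(z-1)\})\}+p_n\sum_{z=1}^{\tau_n}\max_e\{-\lambda e+\zeta_n(i_n^{\max},e)(\beta_n-\max\{0,V_n^l(z-1)\})\}$ (maxima over $e\in\mathcal E$). The imperfect-prediction value function $V_n^I$: $V_n^I(0,0,i)=0$; $V_n^I(0,\tau,i)=\max_e\{-\lambda e+\zeta_n(i,e)\beta_n+(1-\zeta_n(i,e))\sum_jP_n^{i,j}V_n^I(0,\tau-1,j)\}$ for $1\le\tau\le\tau_n$; $V_n^I(0,\tau_n+1,i)=\max_e\{-\lambda e+\zeta_n(i,e)p_n\beta_n+p_n(1-\zeta_n(i,e))\sum_jP_n^{i,j}V_n^I(0,\tau_n,j)\}$; $V_n^I(0,\tau,i)=\max_e\{-\lambda e+\zeta_n(i,e)p_n\beta_n+(1-\zeta_n(i,e))\sum_jP_n^{i,j}V_n^I(0,\tau-1,j)\}$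 for $\tau_n+2\le\tau\le\tau_n+D_n$. Define $g_I(\lambda)=\lambda B+\sum_n\big[\tilde a_n\sum_i\eta_n^iV_n^I(0,\tau_n+D_n,i)+(a_{\max}-\tilde a_n)q_n\sum_i\eta_n^iV_n^I(0,\tau_n,i)\big]$, $g_I^u(\lambda)=\lambda B+\sum_n\{\tilde a_n\min[p_n\beta_n,\tilde V_n^u(\tau_n+D_n)]+(a_{\max}-\tilde a_n)q_n\min[\beta_n,V_n^u(\tau_n)]\}$, $g_I^l(\lambda)=\lambda B+\sum_n\{\tilde a_n\max[0,\tilde V_n^l(\tau_n),\tilde V_n^l(\tau_n+D_n)]+(a_{\max}-\tilde a_n)q_n\max[0,V_n^l(\tau_n)]\}$. $g_I$ is the Lagrange dual function with imperfect prediction. *)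

theory Defs
  imports Complex_Main
begin

text \<open>Conventions: users are indexed by n < N; channel states of user n are 1..K n.
  For a single user, zmin and zmax denote e |-> zeta_n(i_min,e) and e |-> zeta_n(i_max,e);
  E is the finite energy set.\<close>

definition geomf :: "real \<Rightarrow> nat \<Rightarrow> real" where
  "geomf z t = (1 - (1 - z) ^ t) / z"

definition Vl :: "real set \<Rightarrow> (real \<Rightarrow> real) \<Rightarrow> real \<Rightarrow> real \<Rightarrow> nat \<Rightarrow> real" where
  "Vl E zmin lam beta t = (if t = 0 then 0 else
     Max ((\<lambda>e. geomf (zmin e) t * (- lam * e + zmin e * beta)) ` {e\<in>E. 0 < e}))"

definition Vu :: "real set \<Rightarrow> (real \<Rightarrow> real) \<Rightarrow> (real \<Rightarrow> real) \<Rightarrow> real \<Rightarrow> real \<Rightarrow> nat \<Rightarrow> real" where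
  "Vu E zmax zmin lam beta t = (\<Sum>z=1..t.
     Max ((\<lambda>e. - lam * e + zmax e * (beta - max 0 (Vl E zmin lam beta (z - 1)))) ` E))"

definition Vtl :: "real set \<Rightarrow> (real \<Rightarrow> real) \<Rightarrow> real \<Rightarrow> real \<Rightarrow> real \<Rightarrow> nat \<Rightarrow> nat \<Rightarrow> real" where
  "Vtl E zmin lam p beta tn t =
     Max ((\<lambda>e. - (1 - p) * geomf (zmin e) (t - tn) * lam * e
               + p * geomf (zmin e) t * (- lam * e + zmin e * beta)) ` {e\<in>E. 0 < e})"

definition Vtu :: "real set \<Rightarrow> (real \<Rightarrow> real) \<Rightarrow> (real \<Rightarrow> real) \<Rightarrow> real \<Rightarrow> real \<Rightarrow> real \<Rightarrow> nat \<Rightarrow> nat \<Rightarrow> real" where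
  "Vtu E zmax zmin lam p beta tn t =
     (\<Sum>z=tn+1..t. Max ((\<lambda>e. - lam * e + zmax e *
         (p * beta - max 0 (max (Vtl E zmin lam p beta tn tn) (Vtl E zmin lam p beta tn (z - 1))))) ` E))
     + p * (\<Sum>z=1..tn. Max ((\<lambda>e. - lam * e + zmax e * (beta - max 0 (Vl E zmin lam beta (z - 1)))) ` E))"

text \<open>Imperfect-prediction value function of one user: VI ... t i = V_n^I(0,t,i).
  zeta i e = zeta_n(i,e), P i j = P_n^{i,j}, K = K_n, tn = tau_n.
  The recursion agrees with the paper's for all t \<le> tau_n + D_n.\<close>
primrec VI :: "real set \<Rightarrow> (nat \<Rightarrow> real \<Rightarrow> real) \<Rightarrow> (nat \<Rightarrow> nat \<Rightarrow> real) \<Rightarrow> nat \<Rightarrow> real \<Rightarrow> real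
                \<Rightarrow> real \<Rightarrow> nat \<Rightarrow> nat \<Rightarrow> nat \<Rightarrow> real" where
  "VI E zeta P K lam p beta tn 0 = (\<lambda>i. 0)"
| "VI E zeta P K lam p beta tn (Suc t) = (\<lambda>i.
     Max ((\<lambda>e. - lam * e + zeta i e * (if Suc t \<le> tn then beta else p * beta)
              + (if Suc t = tn + 1 then p else 1) * (1 - zeta i e)
                * (\<Sum>j=1..K. P i j * VI E zeta P K lam p beta tn t j)) ` E))"

definition atil :: "real \<Rightarrow> real \<Rightarrow> real \<Rightarrow> real \<Rightarrow> real" where
  "atil amax a p q = (a - amax * q) / (p - q)"

definition gI :: "nat \<Rightarrow> real \<Rightarrow> real \<Rightarrow> (nat \<Rightarrow> real) \<Rightarrow> (nat \<Rightarrow> real) \<Rightarrow> (nat \<Rightarrow> real)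
   \<Rightarrow> (nat \<Rightarrow> nat \<Rightarrow> real) \<Rightarrow> (nat \<Rightarrow> real) \<Rightarrow> (nat \<Rightarrow> nat) \<Rightarrow> (nat \<Rightarrow> nat) \<Rightarrow> (nat \<Rightarrow> nat)
   \<Rightarrow> (nat \<Rightarrow> nat \<Rightarrow> nat \<Rightarrow> real) \<Rightarrow> real set \<Rightarrow> (nat \<Rightarrow> nat \<Rightarrow> real \<Rightarrow> real) \<Rightarrow> real \<Rightarrow> real" where
  "gI N B amax a p q eta beta tau D K P E zeta lam = lam * B + (\<Sum>n<N.
     atil amax (a n) (p n) (q n) * (\<Sum>i=1..K n. eta n i * VI E (zeta n) (P n) (K n) lam (p n) (beta n) (tau n) (tau n + D n) i)
     + (amax - atil amax (a n) (p n) (q n)) * q n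
         * (\<Sum>i=1..K n. eta n i * VI E (zeta n) (P n) (K n) lam (p n) (beta n) (tau n) (tau n) i))"

definition gIu :: "nat \<Rightarrow> real \<Rightarrow> real \<Rightarrow> (nat \<Rightarrow> real) \<Rightarrow> (nat \<Rightarrow> real) \<Rightarrow> (nat \<Rightarrow> real)
   \<Rightarrow> (nat \<Rightarrow> real) \<Rightarrow> (nat \<Rightarrow> nat) \<Rightarrow> (nat \<Rightarrow> nat) \<Rightarrow> real set \<Rightarrow> (nat \<Rightarrow> nat \<Rightarrow> real \<Rightarrow> real)
   \<Rightarrow> (nat \<Rightarrow> nat) \<Rightarrow> (nat \<Rightarrow> nat) \<Rightarrow> real \<Rightarrow> real" where
  "gIu N B amax a p q beta tau D E zeta imin imax lam = lam * B + (\<Sum>n<N.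
     atil amax (a n) (p n) (q n) * min (p n * beta n)
        (Vtu E (zeta n (imax n)) (zeta n (imin n)) lam (p n) (beta n) (tau n) (tau n + D n))
     + (amax - atil amax (a n) (p n) (q n)) * q n
        * min (beta n) (Vu E (zeta n (imax n)) (zeta n (imin n)) lam (beta n) (tau n)))"

definition gIl :: "nat \<Rightarrow> real \<Rightarrow> real \<Rightarrow> (nat \<Rightarrow> real) \<Rightarrow> (nat \<Rightarrow> real) \<Rightarrow> (nat \<Rightarrow> real)
   \<Rightarrow> (nat \<Rightarrow> real) \<Rightarrow> (nat \<Rightarrow> nat) \<Rightarrow> (nat \<Rightarrow> nat) \<Rightarrow> real set \<Rightarrow> (nat \<Rightarrow> nat \<Rightarrow> real \<Rightarrow> real)
   \<Rightarrow> (nat \<Rightarrow> nat) \<Rightarrow> real \<Rightarrow> real" where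
  "gIl N B amax a p q beta tau D E zeta imin lam = lam * B + (\<Sum>n<N.
     atil amax (a n) (p n) (q n) * max 0 (max
        (Vtl E (zeta n (imin n)) lam (p n) (beta n) (tau n) (tau n))
        (Vtl E (zeta n (imin n)) lam (p n) (beta n) (tau n) (tau n + D n)))
     + (amax - atil amax (a n) (p n) (q n)) * q n
        * max 0 (Vl E (zeta n (imin n)) lam (beta n) (tau n)))"

end

theory Submission
  imports Defs
begin

text \<open>For the lower bounds, use one fixed energy
  \<open>e > 0\<close> in every slot: since every state succeeds at least as often as \<open>i_min\<close>,
  the value of this policy dominates its value in a channel stuck in \<open>i_min\<close>, which is the
  geometric expression in \<open>V^l\<close> and \<open>\<tilde>V^l\<close>. For the upper bounds, every slot is credited with
  the best one-step gain in state \<open>i_max\<close>, where the continuation value has been replaced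
  by its lower bound. Averaging over the initial state and then over users with the nonnegative
  weights \<open>\<tilde>a\<^sub>n\<close> and \<open>(a_max - \<tilde>a\<^sub>n) q\<^sub>n\<close> gives \<open>g_I^l \<le> g_I \<le> g_I^u\<close>; the
  infima compare because \<open>g_I^l \<ge> 0\<close> makes all of them finite.\<close>

definition prob_vector :: "'a set \<Rightarrow> ('a \<Rightarrow> real) \<Rightarrow> bool" where
  "prob_vector A w \<longleftrightarrow> (\<forall>i\<in>A. 0 \<le> w i) \<and> sum w A = 1"

lemma prob_vector_sum_ge:
  assumes "prob_vector A w" and "\<And>i. i \<in> A \<Longrightarrow> lo \<le> f i"
  shows "lo \<le> (\<Sum>i\<in>A. w i * f i)"
proof -
  have "lo = (\<Sum>i\<in>A. w i * lo)"
    using assms(1) by (simp add: prob_vector_def sum_distrib_right[symmetric])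
  also have "\<dots> \<le> (\<Sum>i\<in>A. w i * f i)"
    using assms by (intro sum_mono mult_left_mono) (auto simp: prob_vector_def)
  finally show ?thesis .
qed

lemma prob_vector_sum_le:
  assumes "prob_vector A w" and "\<And>i. i \<in> A \<Longrightarrow> f i \<le> hi"
  shows "(\<Sum>i\<in>A. w i * f i) \<le> hi"
proof -
  have "(\<Sum>i\<in>A. w i * f i) \<le> (\<Sum>i\<in>A. w i * hi)"
    using assms by (intro sum_mono mult_left_mono) (auto simp: prob_vector_def)
  also have "\<dots> = hi"
    using assms(1) by (simp add: prob_vector_def sum_distrib_right[symmetric])
  finally show ?thesis .
qed

lemma geomf_0 [simp]: "geomf z 0 = 0"
  by (simp add: geomf_def)

lemma geomf_Suc: "z \<noteq> 0 \<Longrightarrow> geomf z (Suc t) = 1 + (1 - z) * geomf z t"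
  by (simp add: geomf_def field_simps)

lemma Bellman_step_mono:
  fixes z z' l w c :: real
  assumes "z \<le> z'" "z' \<le> 1" "l \<le> w" "w \<le> c"
  shows "z * c + (1 - z) * l \<le> z' * c + (1 - z') * w"
proof -
  have "(1 - z) * l \<le> (1 - z) * w"
    using assms by (intro mult_left_mono) auto
  moreover have "0 \<le> (z' - z) * (c - w)"
    using assms by simp
  ultimately show ?thesis
    by (simp add: algebra_simps)
qed

lemma Bellman_step_le_increment:
  fixes z zmax m w c :: real
  assumes "0 \<le> z" "z \<le> zmax" "m \<le> w" "w \<le> c"
  shows "z * c + (1 - z) * w \<le> w + zmax * (c - m)"
proof -
  have "z * (c - w) \<le> zmax * (c - w)"
    using assms by (intro mult_right_mono) auto
  also have "\<dots> \<le> zmax * (c - m)"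
    using assms by (intro mult_left_mono) auto
  finally show ?thesis
    by (simp add: algebra_simps)
qed

lemma convex_comb_le:
  fixes z w c :: real
  assumes "0 \<le> z" "z \<le> 1" "w \<le> c"
  shows "z * c + (1 - z) * w \<le> c"
  using mult_left_mono[of w c "1 - z"] assms by (simp add: algebra_simps)

lemma Vu_Suc:
  "Vu E zmax zmin lam beta (Suc t) = Vu E zmax zmin lam beta t
     + Max ((\<lambda>e. - lam * e + zmax e * (beta - max 0 (Vl E zmin lam beta t))) ` E)"
  by (simp add: Vu_def)

lemma Vtu_self: "Vtu E zmax zmin lam p beta tn tn = p * Vu E zmax zmin lam beta tn"
  by (simp add: Vtu_def Vu_def)

lemma Vtu_Suc:
  assumes "tn \<le> t"
  shows "Vtu E zmax zmin lam p beta tn (Suc t) = Vtu E zmax zmin lam p beta tn t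
     + Max ((\<lambda>e. - lam * e + zmax e *
         (p * beta - max 0 (max (Vtl E zmin lam p beta tn tn) (Vtl E zmin lam p beta tn t)))) ` E)"
  using assms by (simp add: Vtu_def)

locale prediction_user =
  fixes E :: "real set" and Z :: "nat \<Rightarrow> real \<Rightarrow> real" and P :: "nat \<Rightarrow> nat \<Rightarrow> real"
    and K :: nat and lam p beta :: real and tn imin imax :: nat
  assumes finite_E: "finite E" and E_nonneg: "\<And>e. e \<in> E \<Longrightarrow> 0 \<le> e" and zero_in_E: "0 \<in> E"
    and pos_in_E: "\<exists>e\<in>E. 0 < e"
    and lam_nonneg: "0 \<le> lam" and p_nonneg: "0 \<le> p" and beta_nonneg: "0 \<le> beta"
    and tn_pos: "1 \<le> tn"
    and P_prob: "\<And>i. i \<in> {1..K} \<Longrightarrow> prob_vector {1..K} (P i)"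
    and Z_range: "\<And>i e. i \<in> {1..K} \<Longrightarrow> e \<in> E \<Longrightarrow> 0 \<le> Z i e \<and> Z i e \<le> 1"
    and Z_zero: "\<And>i. i \<in> {1..K} \<Longrightarrow> Z i 0 = 0"
    and Z_pos: "\<And>i e. i \<in> {1..K} \<Longrightarrow> e \<in> E \<Longrightarrow> 0 < e \<Longrightarrow> 0 < Z i e"
    and imax_in: "imax \<in> {1..K}" and imin_in: "imin \<in> {1..K}"
    and Z_le_imax: "\<And>i e. i \<in> {1..K} \<Longrightarrow> e \<in> E \<Longrightarrow> Z i e \<le> Z imax e"
    and Z_imin_le: "\<And>i e. i \<in> {1..K} \<Longrightarrow> e \<in> E \<Longrightarrow> Z imin e \<le> Z i e"
begin

abbreviation V :: "nat \<Rightarrow> nat \<Rightarrow> real" where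
  "V t i \<equiv> VI E Z P K lam p beta tn t i"

abbreviation W :: "nat \<Rightarrow> nat \<Rightarrow> real" where
  "W t i \<equiv> (\<Sum>j=1..K. P i j * V t j)"

lemma W_ge: "i \<in> {1..K} \<Longrightarrow> (\<And>j. j \<in> {1..K} \<Longrightarrow> lo \<le> V t j) \<Longrightarrow> lo \<le> W t i"
  using P_prob by (rule prob_vector_sum_ge)

lemma W_le: "i \<in> {1..K} \<Longrightarrow> (\<And>j. j \<in> {1..K} \<Longrightarrow> V t j \<le> hi) \<Longrightarrow> W t i \<le> hi"
  using P_prob by (rule prob_vector_sum_le)

definition Bellman_term :: "nat \<Rightarrow> nat \<Rightarrow> real \<Rightarrow> real" where
  "Bellman_term t i e = - lam * e + Z i e * (if Suc t \<le> tn then beta else p * beta)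
     + (if Suc t = tn + 1 then p else 1) * (1 - Z i e) * W t i"

lemma Bellman_term_before:
  "t < tn \<Longrightarrow> Bellman_term t i e = - lam * e + Z i e * beta + (1 - Z i e) * W t i"
  by (simp add: Bellman_term_def)

lemma Bellman_term_at:
  "Bellman_term tn i e = - lam * e + Z i e * (p * beta) + (1 - Z i e) * (p * W tn i)"
  by (simp add: Bellman_term_def)

lemma Bellman_term_after:
  "tn < t \<Longrightarrow> Bellman_term t i e = - lam * e + Z i e * (p * beta) + (1 - Z i e) * W t i"
  by (simp add: Bellman_term_def)

lemma V_Suc: "V (Suc t) i = Max (Bellman_term t i ` E)"
  by (simp add: Bellman_term_def)

lemma V_Suc_ge: "e \<in> E \<Longrightarrow> Bellman_term t i e \<le> V (Suc t) i"
  unfolding V_Suc using finite_E by (simp add: Max_ge)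

lemma V_Suc_le: "(\<And>e. e \<in> E \<Longrightarrow> Bellman_term t i e \<le> b) \<Longrightarrow> V (Suc t) i \<le> b"
  unfolding V_Suc using finite_E zero_in_E by (auto intro!: Max.boundedI)

lemma lam_e_nonneg: "e \<in> E \<Longrightarrow> 0 \<le> lam * e"
  using lam_nonneg E_nonneg by simp

text \<open>Energy \<open>0\<close> never succeeds, so the value carries over to the next slot.\<close>

lemma W_le_V_Suc: "i \<in> {1..K} \<Longrightarrow> (if t = tn then p else 1) * W t i \<le> V (Suc t) i"
  using V_Suc_ge[OF zero_in_E, of t i] Z_zero by (simp add: Bellman_term_def)

lemma V_nonneg: "i \<in> {1..K} \<Longrightarrow> 0 \<le> V t i"
proof (induction t arbitrary: i)
  case 0
  then show ?case by simp
next
  case (Suc t)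
  have "0 \<le> W t i"
    using Suc by (intro W_ge) auto
  then have "0 \<le> (if t = tn then p else 1) * W t i"
    using p_nonneg by simp
  then show ?case
    using W_le_V_Suc[OF Suc.prems, of t] by linarith
qed

lemma V_le_beta: "t \<le> tn \<Longrightarrow> i \<in> {1..K} \<Longrightarrow> V t i \<le> beta"
proof (induction t arbitrary: i)
  case 0
  then show ?case using beta_nonneg by simp
next
  case (Suc t)
  have "W t i \<le> beta"
    using Suc by (intro W_le) auto
  show ?case
  proof (rule V_Suc_le)
    fix e assume e: "e \<in> E"
    have "Z i e * beta + (1 - Z i e) * W t i \<le> beta"
      using Z_range[OF Suc.prems(2) e] \<open>W t i \<le> beta\<close> by (intro convex_comb_le) auto
    then show "Bellman_term t i e \<le> beta"
      using Suc.prems lam_e_nonneg[OF e] by (simp add: Bellman_term_before)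
  qed
qed

lemma V_le_p_beta: "Suc tn \<le> t \<Longrightarrow> i \<in> {1..K} \<Longrightarrow> V t i \<le> p * beta"
proof (induction t arbitrary: i rule: nat_induct_at_least)
  case base
  have "W tn i \<le> beta"
    using base V_le_beta by (intro W_le) auto
  then have w: "p * W tn i \<le> p * beta"
    using p_nonneg by (rule mult_left_mono)
  have "V (Suc tn) i \<le> p * beta"
  proof (rule V_Suc_le)
    fix e assume e: "e \<in> E"
    have "Z i e * (p * beta) + (1 - Z i e) * (p * W tn i) \<le> p * beta"
      using Z_range[OF base e] w by (intro convex_comb_le) auto
    then show "Bellman_term tn i e \<le> p * beta"
      using lam_e_nonneg[OF e] by (simp add: Bellman_term_at)
  qed
  then show ?case by simp
next
  case (Suc t)
  have "W t i \<le> p * beta"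
    using Suc by (intro W_le) auto
  show ?case
  proof (rule V_Suc_le)
    fix e assume e: "e \<in> E"
    have "Z i e * (p * beta) + (1 - Z i e) * W t i \<le> p * beta"
      using Z_range[OF Suc.prems e] \<open>W t i \<le> p * beta\<close> by (intro convex_comb_le) auto
    then show "Bellman_term t i e \<le> p * beta"
      using Suc.hyps lam_e_nonneg[OF e] by (simp add: Bellman_term_after)
  qed
qed

text \<open>The value of using the fixed energy \<open>e > 0\<close> in every slot when the channel always
  stays in the worst state, without and with an imperfect prediction at slot \<open>tn\<close>.\<close>

abbreviation worst_state_value :: "real \<Rightarrow> nat \<Rightarrow> real" where
  "worst_state_value e t \<equiv> geomf (Z imin e) t * (- lam * e + Z imin e * beta)"

abbreviation worst_state_value_pred :: "real \<Rightarrow> nat \<Rightarrow> real" where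
  "worst_state_value_pred e t \<equiv> - (1 - p) * geomf (Z imin e) (t - tn) * lam * e
     + p * worst_state_value e t"

lemma worst_state_value_Suc:
  assumes "e \<in> E" "0 < e"
  shows "worst_state_value e (Suc t)
     = - lam * e + Z imin e * beta + (1 - Z imin e) * worst_state_value e t"
proof -
  have "Z imin e \<noteq> 0"
    using Z_pos[OF imin_in assms] by simp
  then show ?thesis
    by (simp add: geomf_Suc algebra_simps)
qed

lemma worst_state_value_pred_Suc_tn:
  assumes "e \<in> E" "0 < e"
  shows "worst_state_value_pred e (Suc tn)
     = - lam * e + Z imin e * (p * beta) + (1 - Z imin e) * (p * worst_state_value e tn)"
proof -
  have "Z imin e \<noteq> 0"
    using Z_pos[OF imin_in assms] by simp
  then show ?thesis
    by (simp add: geomf_Suc algebra_simps)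
qed

lemma worst_state_value_pred_Suc:
  assumes "e \<in> E" "0 < e" "tn \<le> t"
  shows "worst_state_value_pred e (Suc t)
     = - lam * e + Z imin e * (p * beta) + (1 - Z imin e) * worst_state_value_pred e t"
proof -
  have "Z imin e \<noteq> 0"
    using Z_pos[OF imin_in assms(1,2)] by simp
  moreover have "Suc t - tn = Suc (t - tn)"
    using assms(3) by simp
  ultimately show ?thesis
    by (simp add: geomf_Suc algebra_simps)
qed

lemma worst_state_value_le_V:
  assumes e: "e \<in> E" "0 < e"
  shows "t \<le> tn \<Longrightarrow> i \<in> {1..K} \<Longrightarrow> worst_state_value e t \<le> V t i"
proof (induction t arbitrary: i)
  case 0
  then show ?case using V_nonneg by simp
next
  case (Suc t)
  have "W t i \<le> beta"
    using Suc V_le_beta by (intro W_le) auto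
  moreover have "worst_state_value e t \<le> W t i"
    using Suc by (intro W_ge) auto
  ultimately have "Z imin e * beta + (1 - Z imin e) * worst_state_value e t
      \<le> Z i e * beta + (1 - Z i e) * W t i"
    using Z_imin_le[OF Suc.prems(2) e(1)] Z_range[OF Suc.prems(2) e(1)]
    by (intro Bellman_step_mono) auto
  also have "- lam * e + \<dots> \<le> V (Suc t) i"
    using V_Suc_ge[OF e(1), of t i] Suc.prems by (simp add: Bellman_term_before)
  finally show ?case
    using worst_state_value_Suc[OF e] by simp
qed

lemma positive_energies_nonempty: "{e \<in> E. 0 < e} \<noteq> {}"
  using pos_in_E by auto

lemma Vl_le_V:
  assumes "t \<le> tn" "i \<in> {1..K}"
  shows "Vl E (Z imin) lam beta t \<le> V t i"
proof (cases "t = 0")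
  case True
  then show ?thesis using V_nonneg[OF assms(2)] by (simp add: Vl_def)
next
  case False
  have "worst_state_value e t \<le> V t i" if "e \<in> {e \<in> E. 0 < e}" for e
    using that assms by (intro worst_state_value_le_V) auto
  then show ?thesis
    using False finite_E positive_energies_nonempty by (simp add: Vl_def Max_le_iff)
qed

lemma worst_state_value_pred_le_V:
  assumes e: "e \<in> E" "0 < e"
  shows "Suc tn \<le> t \<Longrightarrow> i \<in> {1..K} \<Longrightarrow> worst_state_value_pred e t \<le> V t i"
proof (induction t arbitrary: i rule: nat_induct_at_least)
  case base
  have "W tn i \<le> beta"
    using base V_le_beta by (intro W_le) auto
  then have "p * W tn i \<le> p * beta"
    using p_nonneg by (rule mult_left_mono)
  moreover have "worst_state_value e tn \<le> W tn i"
    using base worst_state_value_le_V[OF e] by (intro W_ge) auto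
  then have "p * worst_state_value e tn \<le> p * W tn i"
    using p_nonneg by (rule mult_left_mono)
  ultimately have "Z imin e * (p * beta) + (1 - Z imin e) * (p * worst_state_value e tn)
      \<le> Z i e * (p * beta) + (1 - Z i e) * (p * W tn i)"
    using Z_imin_le[OF base e(1)] Z_range[OF base e(1)]
    by (intro Bellman_step_mono) auto
  also have "- lam * e + \<dots> \<le> V (Suc tn) i"
    using V_Suc_ge[OF e(1), of tn i] by (simp add: Bellman_term_at)
  finally show ?case
    using worst_state_value_pred_Suc_tn[OF e] by simp
next
  case (Suc t)
  have "W t i \<le> p * beta"
    using Suc V_le_p_beta by (intro W_le) auto
  moreover have "worst_state_value_pred e t \<le> W t i"
    using Suc by (intro W_ge) auto
  ultimately have "Z imin e * (p * beta) + (1 - Z imin e) * worst_state_value_pred e t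
      \<le> Z i e * (p * beta) + (1 - Z i e) * W t i"
    using Z_imin_le[OF Suc.prems e(1)] Z_range[OF Suc.prems e(1)]
    by (intro Bellman_step_mono) auto
  also have "- lam * e + \<dots> \<le> V (Suc t) i"
    using V_Suc_ge[OF e(1), of t i] Suc.hyps by (simp add: Bellman_term_after)
  finally show ?case
    using worst_state_value_pred_Suc[OF e] Suc.hyps by simp
qed

lemma Vtl_le_V:
  assumes "Suc tn \<le> t" "i \<in> {1..K}"
  shows "Vtl E (Z imin) lam p beta tn t \<le> V t i"
proof -
  have "worst_state_value_pred e t \<le> V t i" if "e \<in> {e \<in> E. 0 < e}" for e
    using that assms by (intro worst_state_value_pred_le_V) auto
  then show ?thesis
    using finite_E positive_energies_nonempty by (simp add: Vtl_def Max_le_iff mult.assoc)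
qed

lemma Vtl_at_tn_le: "Vtl E (Z imin) lam p beta tn tn \<le> p * max 0 (Vl E (Z imin) lam beta tn)"
proof -
  have "p * worst_state_value e tn \<le> p * max 0 (Vl E (Z imin) lam beta tn)"
    if "e \<in> {e \<in> E. 0 < e}" for e
  proof (rule mult_left_mono[OF _ p_nonneg])
    have "worst_state_value e tn \<le> Vl E (Z imin) lam beta tn"
      unfolding Vl_def using that tn_pos finite_E by (simp add: Max_ge)
    then show "worst_state_value e tn \<le> max 0 (Vl E (Z imin) lam beta tn)"
      by simp
  qed
  then show ?thesis
    using finite_E positive_energies_nonempty by (simp add: Vtl_def Max_le_iff mult.assoc)
qed

lemma p_Vl_le_V: "Suc tn \<le> t \<Longrightarrow> i \<in> {1..K} \<Longrightarrow> p * max 0 (Vl E (Z imin) lam beta tn) \<le> V t i"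
proof (induction t arbitrary: i rule: nat_induct_at_least)
  case base
  have "max 0 (Vl E (Z imin) lam beta tn) \<le> W tn i"
    using base V_nonneg Vl_le_V by (intro W_ge) auto
  then have "p * max 0 (Vl E (Z imin) lam beta tn) \<le> p * W tn i"
    using p_nonneg by (rule mult_left_mono)
  also have "\<dots> \<le> V (Suc tn) i"
    using W_le_V_Suc[OF base, of tn] by simp
  finally show ?case .
next
  case (Suc t)
  have "p * max 0 (Vl E (Z imin) lam beta tn) \<le> W t i"
    using Suc by (intro W_ge) auto
  also have "\<dots> \<le> V (Suc t) i"
    using W_le_V_Suc[OF Suc.prems, of t] Suc.hyps by simp
  finally show ?case .
qed

lemma max_Vtl_le_V:
  assumes "Suc tn \<le> t" "i \<in> {1..K}"
  shows "max 0 (max (Vtl E (Z imin) lam p beta tn tn) (Vtl E (Z imin) lam p beta tn t)) \<le> V t i"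
  using V_nonneg[OF assms(2), of t] Vtl_le_V[OF assms] Vtl_at_tn_le p_Vl_le_V[OF assms] by simp

lemma V_le_Vu: "t \<le> tn \<Longrightarrow> i \<in> {1..K} \<Longrightarrow> V t i \<le> Vu E (Z imax) (Z imin) lam beta t"
proof (induction t arbitrary: i)
  case 0
  then show ?case by (simp add: Vu_def)
next
  case (Suc t)
  define m where "m = max 0 (Vl E (Z imin) lam beta t)"
  have w_le: "W t i \<le> beta"
    using Suc V_le_beta by (intro W_le) auto
  have m_le: "m \<le> W t i"
    unfolding m_def using Suc V_nonneg Vl_le_V by (intro W_ge) auto
  have "V (Suc t) i \<le> W t i + Max ((\<lambda>e. - lam * e + Z imax e * (beta - m)) ` E)"
  proof (rule V_Suc_le)
    fix e assume e: "e \<in> E"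
    have "Z i e * beta + (1 - Z i e) * W t i \<le> W t i + Z imax e * (beta - m)"
      using Z_range[OF Suc.prems(2) e] Z_le_imax[OF Suc.prems(2) e] w_le m_le
      by (intro Bellman_step_le_increment) auto
    moreover have "- lam * e + Z imax e * (beta - m)
        \<le> Max ((\<lambda>e. - lam * e + Z imax e * (beta - m)) ` E)"
      using finite_E e by (simp add: Max_ge)
    ultimately show "Bellman_term t i e \<le> W t i + Max ((\<lambda>e. - lam * e + Z imax e * (beta - m)) ` E)"
      using Suc.prems by (simp add: Bellman_term_before)
  qed
  moreover have "W t i \<le> Vu E (Z imax) (Z imin) lam beta t"
    using Suc by (intro W_le) auto
  ultimately show ?case
    by (simp add: Vu_Suc m_def)
qed

lemma V_le_Vtu: "Suc tn \<le> t \<Longrightarrow> i \<in> {1..K} \<Longrightarrow> V t i \<le> Vtu E (Z imax) (Z imin) lam p beta tn t"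
proof (induction t arbitrary: i rule: nat_induct_at_least)
  case base
  define m where "m = max 0 (max (Vtl E (Z imin) lam p beta tn tn) (Vtl E (Z imin) lam p beta tn tn))"
  have "W tn i \<le> beta"
    using base V_le_beta by (intro W_le) auto
  then have w_le: "p * W tn i \<le> p * beta"
    using p_nonneg by (rule mult_left_mono)
  have "max 0 (Vl E (Z imin) lam beta tn) \<le> W tn i"
    using base V_nonneg Vl_le_V by (intro W_ge) auto
  then have "p * max 0 (Vl E (Z imin) lam beta tn) \<le> p * W tn i"
    using p_nonneg by (rule mult_left_mono)
  moreover have "0 \<le> p * max 0 (Vl E (Z imin) lam beta tn)"
    using p_nonneg by simp
  ultimately have m_le: "m \<le> p * W tn i"
    unfolding m_def using Vtl_at_tn_le by simp
  have "V (Suc tn) i \<le> p * W tn i + Max ((\<lambda>e. - lam * e + Z imax e * (p * beta - m)) ` E)"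
  proof (rule V_Suc_le)
    fix e assume e: "e \<in> E"
    have "Z i e * (p * beta) + (1 - Z i e) * (p * W tn i) \<le> p * W tn i + Z imax e * (p * beta - m)"
      using Z_range[OF base e] Z_le_imax[OF base e] w_le m_le
      by (intro Bellman_step_le_increment) auto
    moreover have "- lam * e + Z imax e * (p * beta - m)
        \<le> Max ((\<lambda>e. - lam * e + Z imax e * (p * beta - m)) ` E)"
      using finite_E e by (simp add: Max_ge)
    ultimately show "Bellman_term tn i e
        \<le> p * W tn i + Max ((\<lambda>e. - lam * e + Z imax e * (p * beta - m)) ` E)"
      by (simp add: Bellman_term_at)
  qed
  moreover have "W tn i \<le> Vu E (Z imax) (Z imin) lam beta tn"
    using base V_le_Vu by (intro W_le) auto
  then have "p * W tn i \<le> p * Vu E (Z imax) (Z imin) lam beta tn"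
    using p_nonneg by (rule mult_left_mono)
  ultimately show ?case
    by (simp add: Vtu_Suc Vtu_self m_def)
next
  case (Suc t)
  define m where "m = max 0 (max (Vtl E (Z imin) lam p beta tn tn) (Vtl E (Z imin) lam p beta tn t))"
  have w_le: "W t i \<le> p * beta"
    using Suc V_le_p_beta by (intro W_le) auto
  have m_le: "m \<le> W t i"
    unfolding m_def using Suc max_Vtl_le_V by (intro W_ge) auto
  have "V (Suc t) i \<le> W t i + Max ((\<lambda>e. - lam * e + Z imax e * (p * beta - m)) ` E)"
  proof (rule V_Suc_le)
    fix e assume e: "e \<in> E"
    have "Z i e * (p * beta) + (1 - Z i e) * W t i \<le> W t i + Z imax e * (p * beta - m)"
      using Z_range[OF Suc.prems e] Z_le_imax[OF Suc.prems e] w_le m_le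
      by (intro Bellman_step_le_increment) auto
    moreover have "- lam * e + Z imax e * (p * beta - m)
        \<le> Max ((\<lambda>e. - lam * e + Z imax e * (p * beta - m)) ` E)"
      using finite_E e by (simp add: Max_ge)
    ultimately show "Bellman_term t i e \<le> W t i + Max ((\<lambda>e. - lam * e + Z imax e * (p * beta - m)) ` E)"
      using Suc.hyps by (simp add: Bellman_term_after)
  qed
  moreover have "W t i \<le> Vtu E (Z imax) (Z imin) lam p beta tn t"
    using Suc by (intro W_le) auto
  ultimately show ?case
    using Suc.hyps by (simp add: Vtu_Suc m_def)
qed

lemma expected_V_bounds_at_tn:
  assumes "prob_vector {1..K} eta"
  shows "max 0 (Vl E (Z imin) lam beta tn) \<le> (\<Sum>i=1..K. eta i * V tn i)"
    and "(\<Sum>i=1..K. eta i * V tn i) \<le> min beta (Vu E (Z imax) (Z imin) lam beta tn)"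
  using assms V_nonneg Vl_le_V V_le_beta V_le_Vu
  by (auto intro!: prob_vector_sum_ge prob_vector_sum_le)

lemma expected_V_bounds_after_tn:
  assumes "prob_vector {1..K} eta" and "Suc tn \<le> t"
  shows "max 0 (max (Vtl E (Z imin) lam p beta tn tn) (Vtl E (Z imin) lam p beta tn t))
           \<le> (\<Sum>i=1..K. eta i * V t i)"
    and "(\<Sum>i=1..K. eta i * V t i) \<le> min (p * beta) (Vtu E (Z imax) (Z imin) lam p beta tn t)"
  using assms max_Vtl_le_V V_le_p_beta V_le_Vtu
  by (auto intro!: prob_vector_sum_ge prob_vector_sum_le)

end

lemma atil_bounds:
  assumes "0 < amax" "q < p" "q \<le> a / amax" "a / amax \<le> p"
  shows "0 \<le> atil amax a p q" and "atil amax a p q \<le> amax"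
proof -
  have "amax * q \<le> a" "a \<le> amax * p"
    using assms by (auto simp: field_simps)
  then show "0 \<le> atil amax a p q" "atil amax a p q \<le> amax"
    using assms(2) by (auto simp: atil_def divide_le_eq algebra_simps)
qed

lemma weighted_user_sum_mono:
  fixes c d x x' y y' :: "nat \<Rightarrow> real"
  assumes "\<And>n. n < N \<Longrightarrow> 0 \<le> c n \<and> 0 \<le> d n \<and> x n \<le> x' n \<and> y n \<le> y' n"
  shows "l + (\<Sum>n<N. c n * x n + d n * y n) \<le> l + (\<Sum>n<N. c n * x' n + d n * y' n)"
  using assms by (intro add_left_mono sum_mono add_mono mult_left_mono) auto

theorem corollary4:
  fixes N :: nat and B amax :: real
    and a p q beta :: "nat \<Rightarrow> real"
    and eta :: "nat \<Rightarrow> nat \<Rightarrow> real"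
    and tau D K imin imax :: "nat \<Rightarrow> nat"
    and P :: "nat \<Rightarrow> nat \<Rightarrow> nat \<Rightarrow> real"
    and E :: "real set"
    and zeta :: "nat \<Rightarrow> nat \<Rightarrow> real \<Rightarrow> real"
  assumes B_pos: "B > 0" and amax_pos: "amax > 0"
    and E_fin: "finite E" and E_nonneg: "E \<subseteq> {0..}" and E_0: "0 \<in> E"
    and E_pos: "\<exists>e\<in>E. e > 0"
    and a_nonneg: "\<And>n. n < N \<Longrightarrow> a n \<ge> 0"
    and pq: "\<And>n. n < N \<Longrightarrow> 0 \<le> q n \<and> q n < p n \<and> p n \<le> 1"
    and a_range: "\<And>n. n < N \<Longrightarrow> q n \<le> a n / amax \<and> a n / amax \<le> p n"
    and K_pos: "\<And>n. n < N \<Longrightarrow> K n \<ge> 1"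
    and eta_nonneg: "\<And>n i. n < N \<Longrightarrow> i \<in> {1..K n} \<Longrightarrow> eta n i \<ge> 0"
    and eta_sum: "\<And>n. n < N \<Longrightarrow> (\<Sum>i=1..K n. eta n i) = 1"
    and beta_nonneg: "\<And>n. n < N \<Longrightarrow> beta n \<ge> 0"
    and tau_pos: "\<And>n. n < N \<Longrightarrow> tau n \<ge> 1"
    and D_pos: "\<And>n. n < N \<Longrightarrow> D n \<ge> 1"
    and P_nonneg: "\<And>n i j. n < N \<Longrightarrow> i \<in> {1..K n} \<Longrightarrow> j \<in> {1..K n} \<Longrightarrow> P n i j \<ge> 0"
    and P_sum: "\<And>n i. n < N \<Longrightarrow> i \<in> {1..K n} \<Longrightarrow> (\<Sum>j=1..K n. P n i j) = 1"
    and zeta_range: "\<And>n i e. n < N \<Longrightarrow> i \<in> {1..K n} \<Longrightarrow> e \<in> E \<Longrightarrow> 0 \<le> zeta n i e \<and> zeta n i e \<le> 1"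
    and zeta_0: "\<And>n i. n < N \<Longrightarrow> i \<in> {1..K n} \<Longrightarrow> zeta n i 0 = 0"
    and zeta_pos: "\<And>n i e. n < N \<Longrightarrow> i \<in> {1..K n} \<Longrightarrow> e \<in> E \<Longrightarrow> e > 0 \<Longrightarrow> zeta n i e > 0"
    and zeta_mono: "\<And>n i e e'. n < N \<Longrightarrow> i \<in> {1..K n} \<Longrightarrow> e \<in> E \<Longrightarrow> e' \<in> E \<Longrightarrow> e < e'
                      \<Longrightarrow> zeta n i e < zeta n i e'"
    and zeta_total: "\<And>n i j. n < N \<Longrightarrow> i \<in> {1..K n} \<Longrightarrow> j \<in> {1..K n} \<Longrightarrow>
                      (\<forall>e\<in>E. zeta n i e \<ge> zeta n j e) \<or> (\<forall>e\<in>E. zeta n i e \<le> zeta n j e)"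
    and imax_in: "\<And>n. n < N \<Longrightarrow> imax n \<in> {1..K n}"
    and imin_in: "\<And>n. n < N \<Longrightarrow> imin n \<in> {1..K n}"
    and imax_max: "\<And>n i e. n < N \<Longrightarrow> i \<in> {1..K n} \<Longrightarrow> e \<in> E \<Longrightarrow> zeta n i e \<le> zeta n (imax n) e"
    and imin_min: "\<And>n i e. n < N \<Longrightarrow> i \<in> {1..K n} \<Longrightarrow> e \<in> E \<Longrightarrow> zeta n (imin n) e \<le> zeta n i e"
  shows "(\<forall>lam\<ge>0.
            gIl N B amax a p q beta tau D E zeta imin lam \<le> gI N B amax a p q eta beta tau D K P E zeta lam
          \<and> gI N B amax a p q eta beta tau D K P E zeta lam \<le> gIu N B amax a p q beta tau D E zeta imin imax lam)
       \<and> (INF lam\<in>{0..}. gIl N B amax a p q beta tau D E zeta imin lam)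
            \<le> (INF lam\<in>{0..}. gI N B amax a p q eta beta tau D K P E zeta lam)
       \<and> (INF lam\<in>{0..}. gI N B amax a p q eta beta tau D K P E zeta lam)
            \<le> (INF lam\<in>{0..}. gIu N B amax a p q beta tau D E zeta imin imax lam)"
proof -
  have weights: "0 \<le> atil amax (a n) (p n) (q n) \<and> 0 \<le> (amax - atil amax (a n) (p n) (q n)) * q n"
    if "n < N" for n
    using atil_bounds[OF amax_pos, of "q n" "p n" "a n"] pq[OF that] a_range[OF that] by simp
  have user: "prediction_user E (zeta n) (P n) (K n) lam (p n) (beta n) (tau n) (imin n) (imax n)"
    if "n < N" "0 \<le> lam" for n lam
    using that E_fin E_nonneg E_0 E_pos pq[OF that(1)] beta_nonneg[OF that(1)] tau_pos[OF that(1)]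
      P_nonneg[OF that(1)] P_sum[OF that(1)] zeta_range[OF that(1)] zeta_0[OF that(1)]
      zeta_pos[OF that(1)] imax_in[OF that(1)] imin_in[OF that(1)] imax_max[OF that(1)]
      imin_min[OF that(1)]
    by unfold_locales (auto simp: prob_vector_def)
  have eta: "prob_vector {1..K n} (eta n)" if "n < N" for n
    using eta_nonneg eta_sum that by (simp add: prob_vector_def)
  have between: "gIl N B amax a p q beta tau D E zeta imin lam \<le> gI N B amax a p q eta beta tau D K P E zeta lam
      \<and> gI N B amax a p q eta beta tau D K P E zeta lam \<le> gIu N B amax a p q beta tau D E zeta imin imax lam"
    if "0 \<le> lam" for lam
    unfolding gIl_def gI_def gIu_def
    using weights prediction_user.expected_V_bounds_at_tn[OF user[OF _ that] eta]
      prediction_user.expected_V_bounds_after_tn[OF user[OF _ that] eta] D_pos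
    by (intro conjI weighted_user_sum_mono) auto
  have "0 \<le> gIl N B amax a p q beta tau D E zeta imin lam" if "0 \<le> lam" for lam
    unfolding gIl_def using that B_pos weights by (intro add_nonneg_nonneg sum_nonneg) auto
  then have "bdd_below ((\<lambda>lam. gIl N B amax a p q beta tau D E zeta imin lam) ` {0..})"
      and "bdd_below ((\<lambda>lam. gI N B amax a p q eta beta tau D K P E zeta lam) ` {0..})"
    using between by (fastforce intro: bdd_belowI[of _ 0])+
  then show ?thesis
    using between by (auto intro: cINF_mono)
qed

end
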